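(* Let $C$ be a coin operator on $\mathcal H=\ell^2(\mathbb{Z})\otimes\mathbb{C}^2$ with local unitary coins $C(k)$, let $U=SC$ with $S=S_+S_-$, and for $\Phi\in\mathbb{R}$ let $U_\Phi=F_\Phi U$ with $F_\Phi=e^{i\Phi Q}$. Then, with respect to the decomposition $\mathcal H=\mathcal H_e\oplus\mathcal H_o$ into even and odd lattice sites (each identified with $\ell^2(\mathbb{Z})\otimes\mathbb{C}^2$ as below), $$U_{\Phi/2}^2=\left(e^{-i\Phi/2}\tilde F_\Phi W\right)\oplus\left(e^{i\Phi/2}\tilde F_\Phi\tilde W\right),$$ where $W=S_+C_1S_-C_2$ and $\tilde W=S_+\tilde C_1S_-\tilde C_2$ have local coins $C_1(k)=C(2k+1)$, $C_2(k)=C(2k)$, $\tilde C_1(k)=C(2k+2)$, $\tilde C_2(k)=C(2k+1)$, and $\tilde F_\Phi=\left(\mathbb{1}_{\mathbb{Z}}\otimes\begin{bmatrix}1&0\\0&e^{i\Phi}\end{bmatrix}\right)e^{2i\Phi Q}$ acts on $\ell^2(\mathbb{Z})\otimes\mathbb{C}^2$.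
   Context: $\mathcal H=\ell^2(\mathbb{Z})\otimes\mathbb{C}^2$ with basis $\delta_k^\pm=\delta_k\otimes e_\pm$, $e_+=(1,0)^\top$, $e_-=(0,1)^\top$. $T$ is the bilateral shift $\delta_k\mapsto\delta_{k+1}$, $P_\pm=|e_\pm\rangle\langle e_\pm|$, $S_\pm=T^{\pm1}\otimes P_\pm+\mathbb{1}_{\mathbb{Z}}\otimes P_\mp$. A coin operator acts as $C(\delta_k\otimes v)=\delta_k\otimes C(k)v$. $Q$ is the position operator $Q\delta_k^\pm=k\delta_k^\pm$ (on whichever copy of $\ell^2(\mathbb{Z})\otimes\mathbb{C}^2$ is considered). $\mathcal H_e=\ell^2(2\mathbb{Z})\otimes\mathbb{C}^2$, $\mathcal H_o=\ell^2(2\mathbb{Z}+1)\otimes\mathbb{C}^2$, identified with $\ell^2(\mathbb{Z})\otimes\mathbb{C}^2$ via $\delta_{2k}^\pm\mapsto\delta_k^\pm$ and $\delta_{2k+1}^\pm\mapsto\delta_k^\pm$ respectively. *)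

theory Defs
  imports "HOL-Analysis.Analysis"
begin

text \<open>States of l2(Z) (x) C^2 are modelled as functions int => complex^2; component 1 is e_+,
component 2 is e_-.  Operators are given by their (local) action on such functions.\<close>

type_synonym state = "int \<Rightarrow> complex ^ 2"
type_synonym coin = "int \<Rightarrow> complex ^ 2 ^ 2"

definition l2_state :: "state \<Rightarrow> bool" where
  "l2_state \<psi> \<longleftrightarrow> (\<lambda>k. (norm (\<psi> k))\<^sup>2) summable_on UNIV"

definition cmat_adj :: "complex ^ 2 ^ 2 \<Rightarrow> complex ^ 2 ^ 2" where
  "cmat_adj M = (\<chi> i j. cnj (M $ j $ i))"

definition unitary2 :: "complex ^ 2 ^ 2 \<Rightarrow> bool" where
  "unitary2 M \<longleftrightarrow> cmat_adj M ** M = mat 1 \<and> M ** cmat_adj M = mat 1"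

text \<open>S_+ = T (x) P_+ + 1 (x) P_-, with T delta_k = delta_(k+1), i.e. (T psi)(k) = psi(k-1).\<close>
definition Splus :: "state \<Rightarrow> state" where
  "Splus \<psi> k = (\<chi> i. if i = 1 then \<psi> (k - 1) $ 1 else \<psi> k $ i)"

definition Sminus :: "state \<Rightarrow> state" where
  "Sminus \<psi> k = (\<chi> i. if i = 2 then \<psi> (k + 1) $ 2 else \<psi> k $ i)"

definition coin_op :: "coin \<Rightarrow> state \<Rightarrow> state" where
  "coin_op C \<psi> k = C k *v \<psi> k"

definition Fop :: "real \<Rightarrow> state \<Rightarrow> state" where
  "Fop \<Phi> \<psi> k = (\<chi> i. exp (\<i> * of_real \<Phi> * of_int k) * (\<psi> k $ i))"

definition Ftilde :: "real \<Rightarrow> state \<Rightarrow> state" where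
  "Ftilde \<Phi> \<psi> k = (\<chi> i. (if i = 1 then 1 else exp (\<i> * of_real \<Phi>))
                           * (exp (2 * \<i> * of_real \<Phi> * of_int k) * (\<psi> k $ i)))"

definition walkU :: "coin \<Rightarrow> state \<Rightarrow> state" where
  "walkU C = Splus \<circ> Sminus \<circ> coin_op C"

definition walkU_Phi :: "real \<Rightarrow> coin \<Rightarrow> state \<Rightarrow> state" where
  "walkU_Phi \<Phi> C = Fop \<Phi> \<circ> walkU C"

definition walkW :: "coin \<Rightarrow> coin \<Rightarrow> state \<Rightarrow> state" where
  "walkW C1 C2 = Splus \<circ> coin_op C1 \<circ> Sminus \<circ> coin_op C2"

text \<open>Restrictions to H_e and H_o, identified with l2(Z) (x) C^2.\<close>
definition even_part :: "state \<Rightarrow> state" where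
  "even_part \<psi> k = \<psi> (2 * k)"

definition odd_part :: "state \<Rightarrow> state" where
  "odd_part \<psi> k = \<psi> (2 * k + 1)"

end

theory Submission
  imports Defs
begin

text \<open>The shift S = S_+ S_- moves the e_+ component one site to the right and the e_- component
one site to the left, so U exchanges even and odd sites, and two steps of U read on the even
sites are exactly W.  The odd case reduces to the even one by translating the lattice by one
site.  Commuting F_a past U turns it into F_a diag(e^(-ia), e^(ia)), hence
U_a^2 = F_(2a) diag(e^(-ia), e^(ia)) U^2, whose phase at the sites 2k and 2k+1 is the stated one.\<close>

lemma walkU_component:
  "walkU C \<psi> j $ 1 = (C (j - 1) *v \<psi> (j - 1)) $ 1"
  "walkU C \<psi> j $ 2 = (C (j + 1) *v \<psi> (j + 1)) $ 2"
  by (simp_all add: walkU_def Splus_def Sminus_def coin_op_def)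

lemma Fop_apply_eq_smult: "Fop a \<psi> j = exp (\<i> * of_real a * of_int j) *s \<psi> j"
  by (simp add: Fop_def vec_eq_iff)

lemma walkU_Fop_component:
  "walkU C (Fop a \<psi>) j $ 1 = exp (\<i> * of_real a * of_int (j - 1)) * walkU C \<psi> j $ 1"
  "walkU C (Fop a \<psi>) j $ 2 = exp (\<i> * of_real a * of_int (j + 1)) * walkU C \<psi> j $ 2"
  by (simp_all add: walkU_component Fop_apply_eq_smult vector_scalar_commute)

lemma walkU_Phi_square_component:
  "(walkU_Phi a C ^^ 2) \<psi> j $ 1 =
     exp (\<i> * of_real a * of_int (2 * j - 1)) * walkU C (walkU C \<psi>) j $ 1"
  "(walkU_Phi a C ^^ 2) \<psi> j $ 2 =
     exp (\<i> * of_real a * of_int (2 * j + 1)) * walkU C (walkU C \<psi>) j $ 2"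
  by (simp_all add: numeral_2_eq_2 walkU_Phi_def Fop_def walkU_Fop_component
      mult_exp_exp algebra_simps)

lemma even_part_walkU: "even_part (walkU C \<psi>) = Splus (coin_op (\<lambda>k. C (2 * k + 1)) (odd_part \<psi>))"
  by (simp add: fun_eq_iff vec_eq_iff forall_2 walkU_component even_part_def odd_part_def
      Splus_def coin_op_def)

lemma odd_part_walkU: "odd_part (walkU C \<psi>) = Sminus (coin_op (\<lambda>k. C (2 * k)) (even_part \<psi>))"
  by (simp add: fun_eq_iff vec_eq_iff forall_2 walkU_component even_part_def odd_part_def
      Sminus_def coin_op_def algebra_simps)

lemma even_part_walkU_square:
  "even_part (walkU C (walkU C \<psi>)) = walkW (\<lambda>k. C (2 * k + 1)) (\<lambda>k. C (2 * k)) (even_part \<psi>)"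
  by (simp add: even_part_walkU odd_part_walkU walkW_def)

lemma walkU_translate: "walkU (\<lambda>k. C (k + 1)) (\<lambda>k. \<psi> (k + 1)) = (\<lambda>k. walkU C \<psi> (k + 1))"
  by (simp add: fun_eq_iff vec_eq_iff forall_2 walkU_component)

lemma odd_part_eq_even_part_translate: "odd_part \<psi> = even_part (\<lambda>k. \<psi> (k + 1))"
  by (simp add: fun_eq_iff even_part_def odd_part_def)

lemma odd_part_walkU_square:
  "odd_part (walkU C (walkU C \<psi>)) = walkW (\<lambda>k. C (2 * k + 2)) (\<lambda>k. C (2 * k + 1)) (odd_part \<psi>)"
proof -
  have "odd_part (walkU C (walkU C \<psi>))
      = even_part (walkU (\<lambda>k. C (k + 1)) (walkU (\<lambda>k. C (k + 1)) (\<lambda>k. \<psi> (k + 1))))"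
    by (simp add: odd_part_eq_even_part_translate walkU_translate)
  also have "\<dots> = walkW (\<lambda>k. C (2 * k + 2)) (\<lambda>k. C (2 * k + 1)) (odd_part \<psi>)"
    by (simp add: even_part_walkU_square odd_part_eq_even_part_translate add.assoc)
  finally show ?thesis .
qed

theorem corollary3p3:
  fixes C :: coin and \<Phi> :: real
  assumes "\<And>k. unitary2 (C k)"
  shows "\<forall>\<psi>. l2_state \<psi> \<longrightarrow>
           even_part ((walkU_Phi (\<Phi> / 2) C ^^ 2) \<psi>)
             = (\<lambda>k. (\<chi> i. exp (- \<i> * of_real \<Phi> / 2) *
                   (Ftilde \<Phi> (walkW (\<lambda>k. C (2 * k + 1)) (\<lambda>k. C (2 * k)) (even_part \<psi>)) k $ i)))
         \<and> odd_part ((walkU_Phi (\<Phi> / 2) C ^^ 2) \<psi>)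
             = (\<lambda>k. (\<chi> i. exp (\<i> * of_real \<Phi> / 2) *
                   (Ftilde \<Phi> (walkW (\<lambda>k. C (2 * k + 2)) (\<lambda>k. C (2 * k + 1)) (odd_part \<psi>)) k $ i)))"
proof (intro allI impI conjI ext)
  fix \<psi> :: state and k :: int
  show "even_part ((walkU_Phi (\<Phi> / 2) C ^^ 2) \<psi>) k = (\<chi> i. exp (- \<i> * of_real \<Phi> / 2) *
          (Ftilde \<Phi> (walkW (\<lambda>k. C (2 * k + 1)) (\<lambda>k. C (2 * k)) (even_part \<psi>)) k $ i))"
    by (simp add: vec_eq_iff forall_2 Ftilde_def even_part_walkU_square[symmetric])
       (simp add: even_part_def walkU_Phi_square_component mult_exp_exp algebra_simps)
  show "odd_part ((walkU_Phi (\<Phi> / 2) C ^^ 2) \<psi>) k = (\<chi> i. exp (\<i> * of_real \<Phi> / 2) *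
          (Ftilde \<Phi> (walkW (\<lambda>k. C (2 * k + 2)) (\<lambda>k. C (2 * k + 1)) (odd_part \<psi>)) k $ i))"
    by (simp add: vec_eq_iff forall_2 Ftilde_def odd_part_walkU_square[symmetric])
       (simp add: odd_part_def walkU_Phi_square_component mult_exp_exp algebra_simps)
qed

end
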